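(* Let $1\le p<\infty$ and $W\in\mathbb{W}$. Then the Garling function space $G_{W,p}(0,\infty)$ is complete, i.e. a Banach space.
   Context: $\lambda$ is Lebesgue measure on $(0,\infty)$ with its usual order, and $\Lambda$ is the family of Lebesgue-measurable subsets of $(0,\infty)$. For $E,F\in\Lambda$, $\mathbb{MO}(E,F)$ is the set of strictly increasing bijections $m:E\to F$ such that $m$ and $m^{-1}$ are measure-preserving. $\mathbb{W}$ is the set of nonincreasing measurable $W:(0,\infty)\to(0,\infty)$ with (W1) $\lim_{t\to\infty}W(t)=0$, (W2) $\int_0^\infty W(t)\,dt=\infty$, (W3) $\int_0^1W(t)\,dt<\infty$. For measurable $f:(0,\infty)\to[0,\infty]$, $\rho_G(f)=\sup\{(\int_E (f\circ m)(t)^pW(t)\,dt)^{1/p}: E,F\in\Lambda,\ m\in\mathbb{MO}(E,F)\}$; $G_{W,p}(0,\infty)$ is the space of a.e.-classes of measurable $f:(0,\infty)\to[-\infty,\infty]$ with $\|f\|_G:=\rho_G(|f|)<\infty$. *)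

theory Defs
  imports "HOL-Analysis.Analysis"
begin

definition LambdaSets :: "real set set" where
  "LambdaSets = {E. E \<in> sets lebesgue \<and> E \<subseteq> {0<..}}"

definition measure_pres :: "'a measure \<Rightarrow> 'b measure \<Rightarrow> ('a \<Rightarrow> 'b) \<Rightarrow> bool" where
  "measure_pres M N f \<longleftrightarrow> f \<in> measurable M N \<and> distr M N f = N"

definition MO :: "real set \<Rightarrow> real set \<Rightarrow> (real \<Rightarrow> real) set" where
  "MO E F = {m. strict_mono_on E m \<and> bij_betw m E F \<and>
     measure_pres (restrict_space lebesgue E) (restrict_space lebesgue F) m \<and>
     measure_pres (restrict_space lebesgue F) (restrict_space lebesgue E) (inv_into E m)}"

definition WClass :: "(real \<Rightarrow> real) set" where
  "WClass = {W. W \<in> borel_measurable (restrict_space lebesgue {0<..}) \<and>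
     (\<forall>s t. 0 < s \<and> s \<le> t \<longrightarrow> W t \<le> W s) \<and>
     (\<forall>t>0. W t > 0) \<and>
     (W \<longlongrightarrow> 0) at_top \<and>
     (\<integral>\<^sup>+ t. ennreal (W t) * indicator {0<..} t \<partial>lebesgue) = \<infinity> \<and>
     (\<integral>\<^sup>+ t. ennreal (W t) * indicator {0<..1} t \<partial>lebesgue) < \<infinity>}"

(* p-th power of rho_G(|f|): sup over E,F in Lambda, m in MO(E,F) of
   int_E |f(m t)|^p W(t) dt  (sup of p-th roots = p-th root of the sup) *)
definition rhoGpow :: "(real \<Rightarrow> real) \<Rightarrow> real \<Rightarrow> (real \<Rightarrow> real) \<Rightarrow> ennreal" where
  "rhoGpow W p f = (SUP (E, F, m) \<in> {(E, F, m). E \<in> LambdaSets \<and> F \<in> LambdaSets \<and> m \<in> MO E F}.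
      \<integral>\<^sup>+ t. ennreal (\<bar>f (m t)\<bar> powr p * W t) * indicator E t \<partial>lebesgue)"

definition Gspace :: "(real \<Rightarrow> real) \<Rightarrow> real \<Rightarrow> (real \<Rightarrow> real) set" where
  "Gspace W p = {f. f \<in> borel_measurable (restrict_space lebesgue {0<..}) \<and> rhoGpow W p f < \<infinity>}"

definition Gnorm :: "(real \<Rightarrow> real) \<Rightarrow> real \<Rightarrow> (real \<Rightarrow> real) \<Rightarrow> real" where
  "Gnorm W p f = enn2real (rhoGpow W p f) powr (1 / p)"

end

theory Submission
  imports Defs
begin

text \<open>A Cauchy sequence for \<open>\<rho>\<^sub>G\<close> is in particular Cauchy for the weighted integral
  \<open>\<integral>\<^sub>0\<^sup>\<infinity> |f|\<^sup>p W\<close> (take \<open>m = id\<close>), and since \<open>W > 0\<close> a rapidly converging subsequence converges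
  almost everywhere to some \<open>g\<close>. Every admissible \<open>m\<close> is measure-preserving, so this a.e.
  convergence survives composition with \<open>m\<close>, and Fatou's lemma on each set \<open>E\<close> makes \<open>\<rho>\<^sub>G\<close>
  lower semicontinuous along the subsequence: \<open>\<rho>\<^sub>G(f\<^sub>n - g) \<le> liminf\<^sub>k \<rho>\<^sub>G(f\<^sub>n - f\<^sub>r\<^sub>k)\<close>, which is small
  for large \<open>n\<close>. Finiteness of \<open>\<rho>\<^sub>G(g)\<close> follows from the quasi-triangle inequality
  \<open>|a + b|\<^sup>p \<le> 2\<^sup>p (|a|\<^sup>p + |b|\<^sup>p)\<close>.\<close>

definition MO_triples :: "(real set \<times> real set \<times> (real \<Rightarrow> real)) set" where
  "MO_triples = {(E, F, m). E \<in> LambdaSets \<and> F \<in> LambdaSets \<and> m \<in> MO E F}"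

lemma MO_triplesD:
  assumes "(E, F, m) \<in> MO_triples"
  shows "E \<in> sets lebesgue" "E \<subseteq> {0<..}" "F \<in> sets lebesgue" "F \<subseteq> {0<..}"
    and "m \<in> lebesgue_on E \<rightarrow>\<^sub>M lebesgue_on F"
    and "distr (lebesgue_on E) (lebesgue_on F) m = lebesgue_on F"
  using assms by (auto simp: MO_triples_def LambdaSets_def MO_def measure_pres_def)

lemma rhoGpow_eq_SUP:
  "rhoGpow W p f = (SUP (E, F, m) \<in> MO_triples.
      \<integral>\<^sup>+ t. ennreal (\<bar>f (m t)\<bar> powr p * W t) \<partial>lebesgue_on E)"
  unfolding rhoGpow_def MO_triples_def[symmetric]
  by (intro SUP_cong refl) (auto simp: nn_integral_restrict_space dest: MO_triplesD(1))

lemma nn_integral_le_rhoGpow: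
  assumes "(E, F, m) \<in> MO_triples"
  shows "(\<integral>\<^sup>+ t. ennreal (\<bar>f (m t)\<bar> powr p * W t) \<partial>lebesgue_on E) \<le> rhoGpow W p f"
  unfolding rhoGpow_eq_SUP using assms by (rule SUP_upper2) simp

lemma id_in_MO_triples: "({0<..}, {0<..}, \<lambda>x. x) \<in> MO_triples"
proof -
  have inv: "inv_into {0<..} (\<lambda>x. x) x = x" if "x \<in> {0::real<..}" for x
    using that by (simp add: inv_into_f_f)
  have "inv_into {0<..} (\<lambda>x. x) \<in> lebesgue_on {0<..} \<rightarrow>\<^sub>M lebesgue_on {0::real<..} \<longleftrightarrow>
      (\<lambda>x. x) \<in> lebesgue_on {0<..} \<rightarrow>\<^sub>M lebesgue_on {0::real<..}"
    by (rule measurable_cong) (simp add: inv)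
  moreover have "distr (lebesgue_on {0<..}) (lebesgue_on {0<..}) (inv_into {0<..} (\<lambda>x. x)) =
      distr (lebesgue_on {0<..}) (lebesgue_on {0::real<..}) (\<lambda>x. x)"
    by (rule distr_cong) (simp_all add: inv)
  ultimately show ?thesis
    by (auto simp: MO_triples_def LambdaSets_def MO_def measure_pres_def strict_mono_on_def bij_betw_def)
qed

lemma weighted_nn_integral_le_rhoGpow:
  "(\<integral>\<^sup>+ t. ennreal (\<bar>f t\<bar> powr p * W t) \<partial>lebesgue_on {0<..}) \<le> rhoGpow W p f"
  using nn_integral_le_rhoGpow[OF id_in_MO_triples] .

lemma measurable_MO_integrand:
  assumes "f \<in> borel_measurable (lebesgue_on {0<..})" "W \<in> borel_measurable (lebesgue_on {0<..})"
    and "(E, F, m) \<in> MO_triples"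
  shows "(\<lambda>t. ennreal (\<bar>f (m t)\<bar> powr p * W t)) \<in> borel_measurable (lebesgue_on E)"
proof -
  have "(\<lambda>t. f (m t)) \<in> borel_measurable (lebesgue_on E)"
    using measurable_compose[OF MO_triplesD(5)[OF assms(3)]]
      measurable_restrict_mono[OF assms(1) MO_triplesD(4)[OF assms(3)]] .
  moreover have "W \<in> borel_measurable (lebesgue_on E)"
    using measurable_restrict_mono[OF assms(2) MO_triplesD(2)[OF assms(3)]] .
  ultimately show ?thesis by measurable
qed

lemma AE_MO_triple_comp:
  assumes "AE x in lebesgue_on {0<..}. P x" and "(E, F, m) \<in> MO_triples"
  shows "AE t in lebesgue_on E. P (m t)"
proof (rule AE_distrD[OF MO_triplesD(5)[OF assms(2)]])
  have "AE x in lebesgue. x \<in> F \<longrightarrow> P x"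
    using assms(1) MO_triplesD(4)[OF assms(2)] by (auto simp: AE_restrict_space_iff elim!: eventually_mono)
  then show "AE x in distr (lebesgue_on E) (lebesgue_on F) m. P x"
    unfolding MO_triplesD(6)[OF assms(2)] using MO_triplesD(3)[OF assms(2)]
    by (simp add: AE_restrict_space_iff)
qed

lemma abs_powr_le_two_powr_sum:
  fixes x a b p :: real
  assumes "0 \<le> p" "\<bar>x\<bar> \<le> \<bar>a\<bar> + \<bar>b\<bar>"
  shows "\<bar>x\<bar> powr p \<le> 2 powr p * (\<bar>a\<bar> powr p + \<bar>b\<bar> powr p)"
proof -
  have "\<bar>x\<bar> powr p \<le> (2 * max \<bar>a\<bar> \<bar>b\<bar>) powr p"
    using assms by (intro powr_mono2) auto
  also have "\<dots> = 2 powr p * max \<bar>a\<bar> \<bar>b\<bar> powr p" by (simp add: powr_mult)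
  also have "max \<bar>a\<bar> \<bar>b\<bar> powr p \<le> \<bar>a\<bar> powr p + \<bar>b\<bar> powr p"
    by (simp add: max_def)
  finally show ?thesis by (simp add: mult_left_mono)
qed

lemma rhoGpow_quasi_triangle:
  assumes "0 \<le> p" and W: "W \<in> borel_measurable (lebesgue_on {0<..})"
    and a: "a \<in> borel_measurable (lebesgue_on {0<..})" and b: "b \<in> borel_measurable (lebesgue_on {0<..})"
    and h: "\<And>t. \<bar>h t\<bar> \<le> \<bar>a t\<bar> + \<bar>b t\<bar>"
  shows "rhoGpow W p h \<le> ennreal (2 powr p) * (rhoGpow W p a + rhoGpow W p b)"
  unfolding rhoGpow_eq_SUP[of W p h]
proof (rule SUP_least, clarify)
  fix E F m assume EFm: "(E, F, m) \<in> MO_triples"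
  let ?I = "\<lambda>f t. ennreal (\<bar>f (m t)\<bar> powr p * W t)"
  have "(\<integral>\<^sup>+ t. ?I h t \<partial>lebesgue_on E) \<le> (\<integral>\<^sup>+ t. ennreal (2 powr p) * (?I a t + ?I b t) \<partial>lebesgue_on E)"
  proof (rule nn_integral_mono)
    fix t
    show "?I h t \<le> ennreal (2 powr p) * (?I a t + ?I b t)"
    proof (cases "0 \<le> W t")
      case True
      then have "\<bar>h (m t)\<bar> powr p * W t \<le> 2 powr p * (\<bar>a (m t)\<bar> powr p * W t + \<bar>b (m t)\<bar> powr p * W t)"
        using abs_powr_le_two_powr_sum[OF \<open>0 \<le> p\<close> h] by (simp add: mult_right_mono flip: distrib_right mult.assoc)
      then show ?thesis
        using True by (simp add: ennreal_mult[symmetric] ennreal_plus[symmetric] del: ennreal_plus)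
    next
      case False
      then have "\<bar>h (m t)\<bar> powr p * W t \<le> 0" by (simp add: mult_nonneg_nonpos)
      then show ?thesis by (simp add: ennreal_neg)
    qed
  qed
  also have "\<dots> = ennreal (2 powr p) * ((\<integral>\<^sup>+ t. ?I a t \<partial>lebesgue_on E) + (\<integral>\<^sup>+ t. ?I b t \<partial>lebesgue_on E))"
    using measurable_MO_integrand[OF a W EFm] measurable_MO_integrand[OF b W EFm]
    by (simp add: nn_integral_cmult nn_integral_add)
  also have "\<dots> \<le> ennreal (2 powr p) * (rhoGpow W p a + rhoGpow W p b)"
    by (intro mult_left_mono add_mono nn_integral_le_rhoGpow[OF EFm]) auto
  finally show "(\<integral>\<^sup>+ t. ?I h t \<partial>lebesgue_on E) \<le> ennreal (2 powr p) * (rhoGpow W p a + rhoGpow W p b)" .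
qed

lemma rhoGpow_le_liminf:
  assumes "0 < p" and W: "W \<in> borel_measurable (lebesgue_on {0<..})"
    and u: "\<And>k. u k \<in> borel_measurable (lebesgue_on {0<..})"
    and lim: "AE t in lebesgue_on {0<..}. (\<lambda>k. u k t) \<longlonglongrightarrow> v t"
  shows "rhoGpow W p v \<le> liminf (\<lambda>k. rhoGpow W p (u k))"
  unfolding rhoGpow_eq_SUP[of W p v]
proof (rule SUP_least, clarify)
  fix E F m assume EFm: "(E, F, m) \<in> MO_triples"
  let ?I = "\<lambda>f t. ennreal (\<bar>f (m t)\<bar> powr p * W t)"
  have "AE t in lebesgue_on E. ?I v t = liminf (\<lambda>k. ?I (u k) t)"
    using AE_MO_triple_comp[OF lim EFm]
  proof eventually_elim
    case (elim t)
    then have "(\<lambda>k. \<bar>u k (m t)\<bar> powr p * W t) \<longlonglongrightarrow> \<bar>v (m t)\<bar> powr p * W t"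
      using \<open>0 < p\<close> by (intro tendsto_mult_right tendsto_powr' tendsto_rabs) auto
    then show ?case
      by (intro lim_imp_Liminf[symmetric] tendsto_ennrealI) simp_all
  qed
  then have "(\<integral>\<^sup>+ t. ?I v t \<partial>lebesgue_on E) = (\<integral>\<^sup>+ t. liminf (\<lambda>k. ?I (u k) t) \<partial>lebesgue_on E)"
    by (rule nn_integral_cong_AE)
  also have "\<dots> \<le> liminf (\<lambda>k. \<integral>\<^sup>+ t. ?I (u k) t \<partial>lebesgue_on E)"
    using measurable_MO_integrand[OF u W EFm] by (rule nn_integral_liminf)
  also have "\<dots> \<le> liminf (\<lambda>k. rhoGpow W p (u k))"
    by (intro Liminf_mono always_eventually allI nn_integral_le_rhoGpow[OF EFm])
  finally show "(\<integral>\<^sup>+ t. ?I v t \<partial>lebesgue_on E) \<le> liminf (\<lambda>k. rhoGpow W p (u k))" .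
qed

lemma Cauchy_fast_subseq:
  fixes eps :: "nat \<Rightarrow> 'a::{zero,order}" and P :: "'a \<Rightarrow> nat \<Rightarrow> nat \<Rightarrow> bool"
  assumes Cauchy: "\<And>e. 0 < e \<Longrightarrow> \<exists>N. \<forall>m\<ge>N. \<forall>n\<ge>N. P e m n" and eps: "\<And>k. 0 < eps k"
  obtains r where "strict_mono r" "\<And>k. P (eps k) (r (Suc k)) (r k)"
proof -
  obtain N :: "nat \<Rightarrow> nat" where N: "\<And>k m n. N k \<le> m \<Longrightarrow> N k \<le> n \<Longrightarrow> P (eps k) m n"
    using Cauchy[OF eps] by metis
  define r where "r = rec_nat (N 0) (\<lambda>k rk. max (N (Suc k)) (Suc rk))"
  have r_Suc: "r (Suc k) = max (N (Suc k)) (Suc (r k))" for k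
    by (simp add: r_def)
  have "N k \<le> r k" for k
    by (cases k) (simp_all add: r_def)
  then show thesis
    by (intro that[of r] N) (auto simp: strict_mono_Suc_iff r_Suc le_max_iff_disj intro: le_SucI)
qed

lemma convergent_if_summable_scaled_powr_diffs:
  fixes s :: "nat \<Rightarrow> real"
  assumes "0 < p" and "summable (\<lambda>k. (2 ^ k * \<bar>s (Suc k) - s k\<bar>) powr p)"
  shows "convergent s"
proof -
  have "summable (\<lambda>k. s (Suc k) - s k)"
  proof (rule summable_comparison_test_ev)
    have "eventually (\<lambda>k. (2 ^ k * \<bar>s (Suc k) - s k\<bar>) powr p < 1) sequentially"
      using summable_LIMSEQ_zero[OF assms(2)] by (rule order_tendstoD) simp
    then show "eventually (\<lambda>k. norm (s (Suc k) - s k) \<le> (1 / 2) ^ k) sequentially"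
    proof (rule eventually_mono)
      fix k assume "(2 ^ k * \<bar>s (Suc k) - s k\<bar>) powr p < 1"
      then have "2 ^ k * \<bar>s (Suc k) - s k\<bar> < 1"
        using ge_one_powr_ge_zero[of "2 ^ k * \<bar>s (Suc k) - s k\<bar>" p] \<open>0 < p\<close> by fastforce
      then show "norm (s (Suc k) - s k) \<le> (1 / 2) ^ k"
        by (simp add: field_simps)
    qed
  qed simp
  then have "convergent (\<lambda>k. s 0 + (\<Sum>i<k. s (Suc i) - s i))"
    by (simp add: summable_iff_convergent convergent_add_const_iff)
  then show ?thesis
    by (simp add: sum_lessThan_telescope)
qed

lemma AE_summable_if_summable_nn_integrals:
  fixes g :: "nat \<Rightarrow> 'a \<Rightarrow> real"
  assumes g: "\<And>k. g k \<in> borel_measurable M" and g_nonneg: "\<And>k x. x \<in> space M \<Longrightarrow> 0 \<le> g k x"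
    and "summable b" "\<And>k. 0 \<le> b k" and bound: "\<And>k. (\<integral>\<^sup>+ x. ennreal (g k x) \<partial>M) \<le> ennreal (b k)"
  shows "AE x in M. summable (\<lambda>k. g k x)"
proof -
  have "(\<integral>\<^sup>+ x. (\<Sum>k. ennreal (g k x)) \<partial>M) = (\<Sum>k. \<integral>\<^sup>+ x. ennreal (g k x) \<partial>M)"
    using g by (intro nn_integral_suminf) measurable
  also have "\<dots> \<le> (\<Sum>k. ennreal (b k))"
    using bound by (intro suminf_le) auto
  also have "\<dots> = ennreal (suminf b)"
    using assms(3,4) by (intro suminf_ennreal_eq) auto
  finally have "AE x in M. (\<Sum>k. ennreal (g k x)) \<noteq> \<infinity>"
    using g by (intro nn_integral_noteq_infinite) (auto simp: top_unique)
  then show ?thesis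
  proof (rule AE_mp, intro AE_I2 impI)
    fix x assume "x \<in> space M" "(\<Sum>k. ennreal (g k x)) \<noteq> \<infinity>"
    then show "summable (\<lambda>k. g k x)"
      using g_nonneg by (intro summable_suminf_not_top) auto
  qed
qed

lemma weighted_powr_Cauchy_AE_convergent_subseq:
  fixes f :: "nat \<Rightarrow> 'a \<Rightarrow> real"
  assumes "0 < p" and f: "\<And>n. f n \<in> borel_measurable M" and w: "w \<in> borel_measurable M"
    and w_pos: "\<And>x. x \<in> space M \<Longrightarrow> 0 < w x"
    and Cauchy: "\<And>e. 0 < e \<Longrightarrow> \<exists>N. \<forall>m\<ge>N. \<forall>n\<ge>N.
      (\<integral>\<^sup>+ x. ennreal (\<bar>f m x - f n x\<bar> powr p * w x) \<partial>M) < ennreal e"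
  obtains r where "strict_mono r" "AE x in M. convergent (\<lambda>k. f (r k) x)"
proof -
  \<comment> \<open>\<open>eps k\<close> is chosen so that the consecutive differences, scaled by \<open>2\<^sup>k\<close>, still have weighted
    \<open>p\<close>-th power integrals at most \<open>2\<^sup>-\<^sup>k\<close>.\<close>
  define eps :: "nat \<Rightarrow> real" where "eps k = (1 / 2) ^ k / (2 ^ k) powr p" for k
  have "0 < eps k" for k
    by (simp add: eps_def)
  then obtain r where "strict_mono r"
    and r: "\<And>k. (\<integral>\<^sup>+ x. ennreal (\<bar>f (r (Suc k)) x - f (r k) x\<bar> powr p * w x) \<partial>M) < ennreal (eps k)"
    using Cauchy_fast_subseq[where P = "\<lambda>e m n. (\<integral>\<^sup>+ x. ennreal (\<bar>f m x - f n x\<bar> powr p * w x) \<partial>M) < ennreal e",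
        OF Cauchy] by blast
  define d where "d k x = f (r (Suc k)) x - f (r k) x" for k x
  have "(\<integral>\<^sup>+ x. ennreal ((2 ^ k * \<bar>d k x\<bar>) powr p * w x) \<partial>M) \<le> ennreal ((1 / 2) ^ k)" for k
  proof -
    have "(\<integral>\<^sup>+ x. ennreal ((2 ^ k * \<bar>d k x\<bar>) powr p * w x) \<partial>M) =
        ennreal ((2 ^ k) powr p) * (\<integral>\<^sup>+ x. ennreal (\<bar>d k x\<bar> powr p * w x) \<partial>M)"
      unfolding d_def using f w
      by (subst nn_integral_cmult[symmetric])
        (auto simp: powr_mult ennreal_mult'[symmetric] mult.assoc)
    also have "\<dots> \<le> ennreal ((2 ^ k) powr p) * ennreal (eps k)"
      using r[of k] by (intro mult_left_mono) (auto simp: d_def)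
    also have "\<dots> = ennreal ((1 / 2) ^ k)"
      by (simp add: eps_def ennreal_mult[symmetric])
    finally show ?thesis .
  qed
  then have "AE x in M. summable (\<lambda>k. (2 ^ k * \<bar>d k x\<bar>) powr p * w x)"
    using f w w_pos by (intro AE_summable_if_summable_nn_integrals[OF _ _ summable_geometric])
      (auto simp: d_def less_imp_le)
  then have "AE x in M. convergent (\<lambda>k. f (r k) x)"
  proof (rule AE_mp, intro AE_I2 impI)
    fix x assume x: "x \<in> space M" and sum: "summable (\<lambda>k. (2 ^ k * \<bar>d k x\<bar>) powr p * w x)"
    from summable_divide[OF sum, of "w x"] have "summable (\<lambda>k. (2 ^ k * \<bar>d k x\<bar>) powr p)"
      using w_pos[OF x] by simp
    then show "convergent (\<lambda>k. f (r k) x)"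
      unfolding d_def by (rule convergent_if_summable_scaled_powr_diffs[OF \<open>0 < p\<close>])
  qed
  with \<open>strict_mono r\<close> show thesis ..
qed

lemma WClassD:
  assumes "W \<in> WClass"
  shows "W \<in> borel_measurable (lebesgue_on {0<..})" "\<And>t. 0 < t \<Longrightarrow> 0 < W t"
  using assms by (auto simp: WClass_def)

lemma rhoGpow_less_if_Gnorm_less:
  assumes "0 < p" "0 < d" "rhoGpow W p f < \<infinity>" "Gnorm W p f < d powr (1 / p)"
  shows "rhoGpow W p f < ennreal d"
proof -
  have "enn2real (rhoGpow W p f) < d"
  proof (rule ccontr)
    assume "\<not> enn2real (rhoGpow W p f) < d"
    then have "d powr (1 / p) \<le> Gnorm W p f"
      unfolding Gnorm_def using assms(1,2) by (intro powr_mono2) auto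
    with assms(4) show False by simp
  qed
  then have "ennreal (enn2real (rhoGpow W p f)) < ennreal d"
    using assms(2) by (rule ennreal_lessI[rotated])
  then show ?thesis
    using assms(3) by simp
qed

lemma Gnorm_tendsto_zero:
  assumes "0 < p" and small: "\<And>d. 0 < d \<Longrightarrow> eventually (\<lambda>n. rhoGpow W p (u n) \<le> ennreal d) sequentially"
  shows "(\<lambda>n. Gnorm W p (u n)) \<longlonglongrightarrow> 0"
  unfolding Gnorm_def
proof (rule tendsto_zero_powrI[where b = "1 / p"])
  show "(\<lambda>n. enn2real (rhoGpow W p (u n))) \<longlonglongrightarrow> 0"
  proof (rule order_tendstoI)
    fix a :: real assume "0 < a"
    then have "eventually (\<lambda>n. rhoGpow W p (u n) \<le> ennreal (a / 2)) sequentially"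
      by (intro small) simp
    then show "eventually (\<lambda>n. enn2real (rhoGpow W p (u n)) < a) sequentially"
    proof eventually_elim
      case (elim n)
      then have "enn2real (rhoGpow W p (u n)) \<le> a / 2"
        using \<open>0 < a\<close> by (intro enn2real_leI) auto
      with \<open>0 < a\<close> show ?case by simp
    qed
  qed (simp add: always_eventually order.strict_trans2[OF _ enn2real_nonneg])
qed (use \<open>0 < p\<close> in auto)

lemma rhoGpow_diff_finite:
  assumes "0 \<le> p" "W \<in> WClass" "f \<in> Gspace W p" "g \<in> Gspace W p"
  shows "rhoGpow W p (\<lambda>t. f t - g t) < \<infinity>"
proof -
  have "rhoGpow W p (\<lambda>t. f t - g t) \<le> ennreal (2 powr p) * (rhoGpow W p f + rhoGpow W p g)"
    using assms(3,4) by (intro rhoGpow_quasi_triangle[OF assms(1) WClassD(1)[OF assms(2)]])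
      (auto simp: Gspace_def)
  also have "\<dots> < \<infinity>"
    using assms(3,4) by (simp add: Gspace_def ennreal_mult_less_top)
  finally show ?thesis .
qed

lemma rhoGpow_diff_limit_eventually_le:
  assumes "0 < p" and W: "W \<in> borel_measurable (lebesgue_on {0<..})"
    and f: "\<And>n. f n \<in> borel_measurable (lebesgue_on {0<..})"
    and Cauchy: "\<And>d. 0 < d \<Longrightarrow> \<exists>N. \<forall>m\<ge>N. \<forall>n\<ge>N. rhoGpow W p (\<lambda>t. f m t - f n t) < ennreal d"
    and "strict_mono r" and lim: "AE t in lebesgue_on {0<..}. (\<lambda>k. f (r k) t) \<longlonglongrightarrow> g t"
    and "0 < d"
  shows "eventually (\<lambda>n. rhoGpow W p (\<lambda>t. f n t - g t) \<le> ennreal d) sequentially"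
proof -
  obtain N where N: "\<And>m n. N \<le> m \<Longrightarrow> N \<le> n \<Longrightarrow> rhoGpow W p (\<lambda>t. f m t - f n t) < ennreal d"
    using Cauchy[OF \<open>0 < d\<close>] by blast
  show ?thesis
  proof (rule eventually_sequentiallyI)
    fix n assume "N \<le> n"
    have "rhoGpow W p (\<lambda>t. f n t - g t) \<le> liminf (\<lambda>k. rhoGpow W p (\<lambda>t. f n t - f (r k) t))"
      using lim by (intro rhoGpow_le_liminf[OF \<open>0 < p\<close> W])
        (use f in \<open>auto intro: tendsto_diff elim!: eventually_mono\<close>)
    also have "\<dots> \<le> ennreal d"
    proof (intro Liminf_le eventually_sequentiallyI)
      fix k assume "N \<le> k"
      then show "rhoGpow W p (\<lambda>t. f n t - f (r k) t) \<le> ennreal d"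
        using N[OF \<open>N \<le> n\<close>, of "r k"] seq_suble[OF \<open>strict_mono r\<close>, of k] by simp
    qed simp
    finally show "rhoGpow W p (\<lambda>t. f n t - g t) \<le> ennreal d" .
  qed
qed

lemma rhoGpow_Cauchy_has_limit:
  assumes "0 < p" and W: "W \<in> WClass" and fG: "\<And>n. f n \<in> Gspace W p"
    and Cauchy: "\<And>d. 0 < d \<Longrightarrow> \<exists>N. \<forall>m\<ge>N. \<forall>n\<ge>N. rhoGpow W p (\<lambda>t. f m t - f n t) < ennreal d"
  obtains g where "g \<in> Gspace W p"
    and "\<And>d. 0 < d \<Longrightarrow> eventually (\<lambda>n. rhoGpow W p (\<lambda>t. f n t - g t) \<le> ennreal d) sequentially"
proof -
  have f: "f n \<in> borel_measurable (lebesgue_on {0<..})" for n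
    using fG by (simp add: Gspace_def)
  have W_pos: "0 < W t" if "t \<in> space (lebesgue_on {0<..})" for t
    using that WClassD(2)[OF W] by simp
  have "\<exists>N. \<forall>m\<ge>N. \<forall>n\<ge>N.
      (\<integral>\<^sup>+ t. ennreal (\<bar>f m t - f n t\<bar> powr p * W t) \<partial>lebesgue_on {0<..}) < ennreal d"
    if "0 < d" for d
  proof -
    obtain N where "\<And>m n. N \<le> m \<Longrightarrow> N \<le> n \<Longrightarrow> rhoGpow W p (\<lambda>t. f m t - f n t) < ennreal d"
      using Cauchy[OF \<open>0 < d\<close>] by blast
    then show ?thesis
      by (intro exI[of _ N] allI impI le_less_trans[OF weighted_nn_integral_le_rhoGpow]) simp
  qed
  then obtain r where "strict_mono r" and conv: "AE t in lebesgue_on {0<..}. convergent (\<lambda>k. f (r k) t)"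
    using weighted_powr_Cauchy_AE_convergent_subseq[where f = f, OF \<open>0 < p\<close> f WClassD(1)[OF W] W_pos]
    by blast
  define g where "g t = lim (\<lambda>k. f (r k) t)" for t
  have g: "g \<in> borel_measurable (lebesgue_on {0<..})"
    unfolding g_def using f by measurable
  have g_lim: "AE t in lebesgue_on {0<..}. (\<lambda>k. f (r k) t) \<longlonglongrightarrow> g t"
    using conv by eventually_elim (simp add: g_def convergent_LIMSEQ_iff)
  have close: "eventually (\<lambda>n. rhoGpow W p (\<lambda>t. f n t - g t) \<le> ennreal d) sequentially"
    if "0 < d" for d
    using \<open>0 < p\<close> WClassD(1)[OF W] f Cauchy \<open>strict_mono r\<close> g_lim \<open>0 < d\<close>
    by (rule rhoGpow_diff_limit_eventually_le)
  obtain N where N: "rhoGpow W p (\<lambda>t. f N t - g t) \<le> ennreal 1"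
    using eventually_sequentially close[of 1] by auto
  have "rhoGpow W p g \<le> ennreal (2 powr p) * (rhoGpow W p (f N) + rhoGpow W p (\<lambda>t. f N t - g t))"
    using \<open>0 < p\<close> f g by (intro rhoGpow_quasi_triangle WClassD(1)[OF W]) auto
  also have "\<dots> < \<infinity>"
    using fG[of N] N by (simp add: Gspace_def ennreal_mult_less_top le_less_trans)
  finally have "g \<in> Gspace W p"
    using g by (simp add: Gspace_def)
  then show thesis
    using close by (rule that)
qed

theorem mainTheorem8:
  fixes p :: real and W :: "real \<Rightarrow> real"
  assumes "1 \<le> p" and "W \<in> WClass"
  shows "\<forall>f :: nat \<Rightarrow> real \<Rightarrow> real.
           (\<forall>n. f n \<in> Gspace W p) \<and>
           (\<forall>e>0. \<exists>N. \<forall>m\<ge>N. \<forall>n\<ge>N. Gnorm W p (\<lambda>t. f m t - f n t) < e)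
           \<longrightarrow> (\<exists>g \<in> Gspace W p. (\<lambda>n. Gnorm W p (\<lambda>t. f n t - g t)) \<longlonglongrightarrow> 0)"
proof (intro allI impI, elim conjE)
  fix f :: "nat \<Rightarrow> real \<Rightarrow> real"
  assume fG: "\<forall>n. f n \<in> Gspace W p"
    and Cauchy: "\<forall>e>0. \<exists>N. \<forall>m\<ge>N. \<forall>n\<ge>N. Gnorm W p (\<lambda>t. f m t - f n t) < e"
  have "0 < p"
    using \<open>1 \<le> p\<close> by simp
  have "\<exists>N. \<forall>m\<ge>N. \<forall>n\<ge>N. rhoGpow W p (\<lambda>t. f m t - f n t) < ennreal d" if "0 < d" for d
  proof -
    obtain N where "\<forall>m\<ge>N. \<forall>n\<ge>N. Gnorm W p (\<lambda>t. f m t - f n t) < d powr (1 / p)"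
      using Cauchy[rule_format, of "d powr (1 / p)"] \<open>0 < d\<close> by auto
    then show ?thesis
      using fG \<open>0 < d\<close> \<open>0 < p\<close> \<open>W \<in> WClass\<close>
      by (auto intro!: exI[of _ N] rhoGpow_less_if_Gnorm_less rhoGpow_diff_finite)
  qed
  then obtain g where "g \<in> Gspace W p"
    and close: "\<And>d. 0 < d \<Longrightarrow> eventually (\<lambda>n. rhoGpow W p (\<lambda>t. f n t - g t) \<le> ennreal d) sequentially"
    using rhoGpow_Cauchy_has_limit[OF \<open>0 < p\<close> \<open>W \<in> WClass\<close>] fG by blast
  moreover have "(\<lambda>n. Gnorm W p (\<lambda>t. f n t - g t)) \<longlonglongrightarrow> 0"
    using Gnorm_tendsto_zero[OF \<open>0 < p\<close> close] .
  ultimately show "\<exists>g \<in> Gspace W p. (\<lambda>n. Gnorm W p (\<lambda>t. f n t - g t)) \<longlonglongrightarrow> 0"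
    by blast
qed

end
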